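(* Let $f:\mathbb{F}_q^k\to\mathrm{Im}(f)$ and integers $0\le t_d\le t_f$. Then: (i) for any $\{u_1,\dots,u_m\}\subseteq\mathbb{F}_q^k$, $r_f(k,t_d,t_f)\ge N(\mathcal{D}_f(t_d,t_f:u_1,\dots,u_m))$; (ii) if $|\mathrm{Im}(f)|\ge 2$, then $r_f(k,t_d,t_f)\ge 2t_f$; (iii) $r_f(k,t_d,t_f)\ge N(q^k,2t_d+1)-k$, where $N(M,d)$ denotes the minimum length of a $q$-ary code with $M$ codewords and minimum distance at least $d$.
   Context: $d(\cdot,\cdot)$ is Hamming distance. For $f:\mathbb{F}_q^k\to\mathrm{Im}(f)$ and integers $0\le d_d\le d_f$, an $(f\!:d_d,d_f)$-FCC with redundancy $r$ is a systematic encoding $\mathfrak{C}_f(u)=(u,p_u)\in\mathbb{F}_q^{k+r}$ with $d(\mathfrak{C}_f(u_1),\mathfrak{C}_f(u_2))\ge d_d$ whenever $u_1\ne u_2$ and $\ge d_f$ whenever $f(u_1)\ne f(u_2)$. $r_f(k,t_d,t_f)$ is the minimum $r$ for which an $(f\!:2t_d+1,2t_f+1)$-FCC with redundancy $r$ exists. $\mathcal{D}_f(t_d,t_f:u_1,\dots,u_M)$ is the $M\times M$ matrix with $(i,j)$ entry $\max(2t_d+1-d(u_i,u_j),0)$ if $u_i\ne u_j$ and $f(u_i)=f(u_j)$; $\max(2t_f+1-d(u_i,u_j),0)$ if $f(u_i)\ne f(u_j)$; $0$ otherwise. For a nonnegative integer matrix $\mathcal{D}$, $N(\mathcal{D})$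 is the least $r$ such that there are $p_1,\dots,p_M\in\mathbb{F}_q^r$ with $d(p_i,p_j)\ge[\mathcal{D}]_{i,j}$ for all $i,j$. *)

theory Defs
  imports Main
begin

definition words :: "nat \<Rightarrow> 'a list set" where
  "words n = {xs. length xs = n}"

definition hamming :: "'a list \<Rightarrow> 'a list \<Rightarrow> nat" where
  "hamming xs ys = card {i. i < length xs \<and> xs ! i \<noteq> ys ! i}"

text \<open>p is the redundancy map of an (f : dd, df)-FCC with redundancy r for
  messages of length k; the codeword of u is u @ p u.\<close>
definition is_FCC :: "('a list \<Rightarrow> 'b) \<Rightarrow> nat \<Rightarrow> nat \<Rightarrow> nat \<Rightarrow> nat \<Rightarrow> ('a list \<Rightarrow> 'a list) \<Rightarrow> bool" where
  "is_FCC f k dd df r p \<longleftrightarrow>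
     (\<forall>u\<in>words k. length (p u) = r) \<and>
     (\<forall>u1\<in>words k. \<forall>u2\<in>words k.
        (u1 \<noteq> u2 \<longrightarrow> hamming (u1 @ p u1) (u2 @ p u2) \<ge> dd) \<and>
        (f u1 \<noteq> f u2 \<longrightarrow> hamming (u1 @ p u1) (u2 @ p u2) \<ge> df))"

definition r_f :: "('a list \<Rightarrow> 'b) \<Rightarrow> nat \<Rightarrow> nat \<Rightarrow> nat \<Rightarrow> nat" where
  "r_f f k td tf = (LEAST r. \<exists>p :: 'a list \<Rightarrow> 'a list. is_FCC f k (2*td+1) (2*tf+1) r p)"

text \<open>The distance requirement matrix D_f(t_d,t_f : u_1,...,u_M), indexed from 0.\<close>
definition Dmat :: "('a list \<Rightarrow> 'b) \<Rightarrow> nat \<Rightarrow> nat \<Rightarrow> 'a list list \<Rightarrow> nat \<Rightarrow> nat \<Rightarrow> nat" where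
  "Dmat f td tf us i j =
     (if us ! i \<noteq> us ! j \<and> f (us ! i) = f (us ! j) then (2*td+1) - hamming (us ! i) (us ! j)
      else if f (us ! i) \<noteq> f (us ! j) then (2*tf+1) - hamming (us ! i) (us ! j)
      else 0)"

definition N_mat :: "'a itself \<Rightarrow> nat \<Rightarrow> (nat \<Rightarrow> nat \<Rightarrow> nat) \<Rightarrow> nat" where
  "N_mat _ M D = (LEAST r. \<exists>ps :: nat \<Rightarrow> 'a list.
      (\<forall>i<M. length (ps i) = r) \<and> (\<forall>i<M. \<forall>j<M. hamming (ps i) (ps j) \<ge> D i j))"

definition N_code :: "'a itself \<Rightarrow> nat \<Rightarrow> nat \<Rightarrow> nat" where
  "N_code _ M d = (LEAST n. \<exists>C :: 'a list set. C \<subseteq> words n \<and> card C = M \<and>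
      (\<forall>c1\<in>C. \<forall>c2\<in>C. c1 \<noteq> c2 \<longrightarrow> hamming c1 c2 \<ge> d))"

end

theory Submission
  imports Defs
begin

text \<open>The Hamming distance of two codewords u @ p u splits into the distance of the
  messages plus the distance of the redundancy parts. Hence for an optimal FCC p the
  redundancy vectors p u_i realise the requirement matrix D_f, giving (i);
  any two messages with different f-values are joined by a path of messages at
  distance 1, and along it some adjacent pair has different f-values, so their
  redundancy vectors are at distance at least 2 t_f, giving (ii); and the codewords
  form a code of q^k words of length k + r and minimum distance 2 t_d + 1, giving (iii).
  The optimum r_f exists because the code whose codewords are 2 t_f + 1 copies of the
  message is an FCC.\<close>

lemma hamming_Nil [simp]: "hamming [] ys = 0"
  by (simp add: hamming_def)

lemma hamming_self [simp]: "hamming xs xs = 0"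
  by (simp add: hamming_def)

lemma hamming_Cons:
  "hamming (x # xs) (y # ys) = (if x \<noteq> y then 1 else 0) + hamming xs ys"
proof -
  let ?D = "{i. i < length xs \<and> xs ! i \<noteq> ys ! i}"
  have split: "{i. i < length (x # xs) \<and> (x # xs) ! i \<noteq> (y # ys) ! i}
      = {i. i = 0 \<and> x \<noteq> y} \<union> Suc ` ?D"
  proof (rule set_eqI)
    fix i show "i \<in> {i. i < length (x # xs) \<and> (x # xs) ! i \<noteq> (y # ys) ! i}
        \<longleftrightarrow> i \<in> {i. i = 0 \<and> x \<noteq> y} \<union> Suc ` ?D"
      by (cases i) auto
  qed
  have "card ({i. i = 0 \<and> x \<noteq> y} \<union> Suc ` ?D) = card {i::nat. i = 0 \<and> x \<noteq> y} + card (Suc ` ?D)"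
    by (intro card_Un_disjoint) (auto intro: finite_subset[of _ "{0}"])
  also have "card (Suc ` ?D) = hamming xs ys"
    unfolding hamming_def by (simp add: card_image)
  also have "card {i::nat. i = 0 \<and> x \<noteq> y} = (if x \<noteq> y then 1 else 0)"
    by auto
  finally show ?thesis
    unfolding hamming_def[of "x # xs"] split .
qed

lemma hamming_append:
  "length a = length b \<Longrightarrow> hamming (a @ c) (b @ d) = hamming a b + hamming c d"
proof (induction a arbitrary: b)
  case Nil
  then show ?case by simp
next
  case (Cons x a)
  then obtain y b' where "b = y # b'"
    by (cases b) auto
  with Cons show ?case
    by (simp add: hamming_Cons)
qed

lemma hamming_le_length: "hamming xs ys \<le> length xs"
  unfolding hamming_def by (rule card_mono[where B = "{..<length xs}", simplified]) auto

lemma hamming_eq_0_iff: "length xs = length ys \<Longrightarrow> hamming xs ys = 0 \<longleftrightarrow> xs = ys"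
  by (auto simp: hamming_def intro: nth_equalityI)

lemma hamming_concat_replicate:
  "length a = length b \<Longrightarrow>
    hamming (concat (replicate m a)) (concat (replicate m b)) = m * hamming a b"
  by (induction m) (simp_all add: hamming_append)

lemma card_words: "card (words n :: 'a::finite list set) = card (UNIV :: 'a set) ^ n"
  using card_lists_length_eq[of "UNIV :: 'a set" n] by (simp add: words_def)

lemma ex_adjacent_words_separating:
  assumes "length xs = length ys" and "g xs \<noteq> g ys"
  shows "\<exists>v w. length v = length xs \<and> length w = length xs \<and> hamming v w \<le> 1 \<and> g v \<noteq> g w"
  using assms
proof (induction xs arbitrary: ys g)
  case Nil
  then show ?case by simp
next
  case (Cons x xs)
  then obtain y ys' where ys: "ys = y # ys'"
    by (cases ys) auto
  show ?case
  proof (cases "g (x # xs) = g (x # ys')")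
    case True
    then have "g (x # ys') \<noteq> g (y # ys')"
      using Cons.prems ys by simp
    moreover have "hamming (x # ys') (y # ys') \<le> 1"
      by (simp add: hamming_Cons)
    ultimately show ?thesis
      using Cons.prems ys by (metis length_Cons)
  next
    case False
    then obtain v w where "length v = length xs" "length w = length xs" "hamming v w \<le> 1"
        "g (x # v) \<noteq> g (x # w)"
      using Cons.IH[of ys' "\<lambda>l. g (x # l)"] Cons.prems ys by auto
    then show ?thesis
      by (intro exI[of _ "x # v"] exI[of _ "x # w"]) (simp add: hamming_Cons)
  qed
qed

lemma is_FCC_hamming:
  assumes "is_FCC f k dd df r p" and "u1 \<in> words k" and "u2 \<in> words k"
  shows "hamming (u1 @ p u1) (u2 @ p u2) = hamming u1 u2 + hamming (p u1) (p u2)"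
    and "u1 \<noteq> u2 \<Longrightarrow> dd \<le> hamming u1 u2 + hamming (p u1) (p u2)"
    and "f u1 \<noteq> f u2 \<Longrightarrow> df \<le> hamming u1 u2 + hamming (p u1) (p u2)"
proof -
  show eq: "hamming (u1 @ p u1) (u2 @ p u2) = hamming u1 u2 + hamming (p u1) (p u2)"
    using assms(2,3) by (intro hamming_append) (simp add: words_def)
  show "u1 \<noteq> u2 \<Longrightarrow> dd \<le> hamming u1 u2 + hamming (p u1) (p u2)"
       "f u1 \<noteq> f u2 \<Longrightarrow> df \<le> hamming u1 u2 + hamming (p u1) (p u2)"
    using assms unfolding is_FCC_def eq[symmetric] by blast+
qed

lemma is_FCC_repetition:
  assumes "dd \<le> Suc m" and "df \<le> Suc m"
  shows "is_FCC f k dd df (m * k) (\<lambda>u. concat (replicate m u))"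
  unfolding is_FCC_def
proof (intro conjI ballI impI)
  fix u :: "'a list"
  assume "u \<in> words k"
  then show "length (concat (replicate m u)) = m * k"
    by (simp add: words_def length_concat sum_list_replicate)
next
  fix u1 u2 :: "'a list"
  assume "u1 \<in> words k" "u2 \<in> words k"
  then have len: "length u1 = length u2"
    by (simp add: words_def)
  have dist: "hamming (u1 @ concat (replicate m u1)) (u2 @ concat (replicate m u2))
      = Suc m * hamming u1 u2"
    using len by (simp add: hamming_append hamming_concat_replicate)
  have far: "Suc m \<le> hamming (u1 @ concat (replicate m u1)) (u2 @ concat (replicate m u2))"
    if "u1 \<noteq> u2"
  proof -
    have "1 \<le> hamming u1 u2"
      using that hamming_eq_0_iff[OF len] by (simp add: Suc_le_eq)
    then show ?thesis
      unfolding dist by (metis mult_le_mono2 nat_mult_1_right)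
  qed
  show "dd \<le> hamming (u1 @ concat (replicate m u1)) (u2 @ concat (replicate m u2))"
    if "u1 \<noteq> u2"
    using far[OF that] assms(1) by linarith
  show "df \<le> hamming (u1 @ concat (replicate m u1)) (u2 @ concat (replicate m u2))"
    if "f u1 \<noteq> f u2"
    using far that assms(2) by fastforce
qed

lemma r_f_attained:
  assumes "td \<le> tf"
  shows "\<exists>p :: 'a list \<Rightarrow> 'a list. is_FCC f k (2*td+1) (2*tf+1) (r_f f k td tf) p"
proof -
  have "is_FCC f k (2*td+1) (2*tf+1) (2*tf*k) (\<lambda>u :: 'a list. concat (replicate (2*tf) u))"
    using assms by (intro is_FCC_repetition) simp_all
  then have "\<exists>r p :: 'a list \<Rightarrow> 'a list. is_FCC f k (2*td+1) (2*tf+1) r p"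
    by blast
  then show ?thesis
    unfolding r_f_def by (rule LeastI_ex)
qed

lemma N_mat_Dmat_le_redundancy:
  fixes p :: "'a list \<Rightarrow> 'a list"
  assumes "is_FCC f k (2*td+1) (2*tf+1) r p" and "set us \<subseteq> words k"
  shows "N_mat TYPE('a) (length us) (Dmat f td tf us) \<le> r"
proof -
  have words: "us ! i \<in> words k" if "i < length us" for i
    using that assms(2) nth_mem by blast
  have "Dmat f td tf us i j \<le> hamming (p (us ! i)) (p (us ! j))"
    if "i < length us" "j < length us" for i j
    using is_FCC_hamming(2,3)[OF assms(1) words[OF that(1)] words[OF that(2)]]
    unfolding Dmat_def by auto
  moreover have "length (p (us ! i)) = r" if "i < length us" for i
    using assms(1) words[OF that] by (simp add: is_FCC_def)
  ultimately show ?thesis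
    unfolding N_mat_def by (intro Least_le) (rule exI[of _ "\<lambda>i. p (us ! i)"], simp)
qed

lemma is_FCC_function_distance_le_Suc_redundancy:
  assumes "is_FCC f k dd df r p" and "2 \<le> card (f ` words k)"
  shows "df \<le> Suc r"
proof -
  obtain u1 u2 where "u1 \<in> words k" "u2 \<in> words k" "f u1 \<noteq> f u2"
    using assms(2) card_le_Suc0_iff_eq[of "f ` words k"] by (cases "finite (f ` words k)") auto
  then obtain v w where "length v = k" "length w = k" "hamming v w \<le> 1" "f v \<noteq> f w"
    using ex_adjacent_words_separating[of u1 u2 f] by (auto simp: words_def)
  moreover from this have "v \<in> words k" "w \<in> words k"
    by (simp_all add: words_def)
  moreover from this have "hamming (p v) (p w) \<le> r"
    using assms(1) hamming_le_length[of "p v" "p w"] by (simp add: is_FCC_def)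
  ultimately show ?thesis
    using is_FCC_hamming(3)[OF assms(1)] by fastforce
qed

lemma N_code_le_length_of_FCC:
  fixes p :: "'a::finite list \<Rightarrow> 'a list"
  assumes "is_FCC f k dd df r p"
  shows "N_code TYPE('a) (card (UNIV :: 'a set) ^ k) dd \<le> k + r"
proof -
  let ?C = "(\<lambda>u. u @ p u) ` words k"
  have "inj_on (\<lambda>u. u @ p u) (words k)"
    by (rule inj_onI) (auto simp: words_def)
  then have "card ?C = card (UNIV :: 'a set) ^ k"
    by (simp add: card_image card_words)
  moreover have "?C \<subseteq> words (k + r)"
    using assms by (auto simp: is_FCC_def words_def)
  moreover have "\<forall>c1\<in>?C. \<forall>c2\<in>?C. c1 \<noteq> c2 \<longrightarrow> dd \<le> hamming c1 c2"
    using assms by (auto simp: is_FCC_def)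
  ultimately show ?thesis
    unfolding N_code_def by (intro Least_le) blast
qed

theorem theorem4:
  fixes f :: "'a::{finite,field} list \<Rightarrow> 'b" and k td tf :: nat
  assumes "td \<le> tf"
  shows "(\<forall>us :: 'a list list. distinct us \<and> set us \<subseteq> words k \<longrightarrow>
            r_f f k td tf \<ge> N_mat TYPE('a) (length us) (Dmat f td tf us))
       \<and> (card (f ` words k) \<ge> 2 \<longrightarrow> r_f f k td tf \<ge> 2 * tf)
       \<and> int (r_f f k td tf) \<ge> int (N_code TYPE('a) (card (UNIV :: 'a set) ^ k) (2*td+1)) - int k"
proof -
  obtain p :: "'a list \<Rightarrow> 'a list" where p: "is_FCC f k (2*td+1) (2*tf+1) (r_f f k td tf) p"
    using r_f_attained[OF assms] by blast
  show ?thesis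
    using N_mat_Dmat_le_redundancy[OF p] is_FCC_function_distance_le_Suc_redundancy[OF p]
      N_code_le_length_of_FCC[OF p] by auto
qed

end
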